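(* Let $(X,\phi)$ be an acyclic convex geometry and let $A\subseteq X$ be a minimal generator of $b\in X$. Then $A$ is redundant if and only if $\phi(A)$ contains a minimal generator of $b$ different from $A$.
   Context: All sets are finite. A closure operator $\phi$ on $X$ is extensive, monotone and idempotent on $2^X$; closed sets are those with $\phi(C)=C$. $(X,\phi)$ is standard if $\phi(\emptyset)=\emptyset$ and $\phi(\{x\})\setminus\{x\}$ is closed for each $x$. A unit implicational base $\Sigma$ (set of implications $A\to b$, $A\subseteq X$, $b\in X$) is an implicational base of $(X,\phi)$ if its closed sets (sets $S$ such that for each $A\to b\in\Sigma$, $A\not\subseteq S$ or $b\in S$) are exactly the closed sets of $\phi$. $\Sigma$ is acyclic if the directed graph on $X$ with arcs $x\to y$ whenever some $A\to y\in\Sigma$ has $x\in A$ has no directed cycle; $\Sigma$ is irredundant if removing any implication changes the closed sets. An acyclic convex geometry is a standard closure space $(X,\phi)$ admitting an acyclic implicational base. A set $A$ is a minimal generator of $b$ if $b\in\phi(A)$ and $b\notin\phi(A\setminus\{x\})$ for all $x\in A$. It is known that an acyclic convex geometry admits a unique irredundant implicational base in which every implication $A\to b$ has $A$ a minimal generator of $b$; this is the critical base. A minimal generator $A$ of $b$ is critical if $A\to b$ belongs to the critical base, and redundant otherwise. *)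

theory Defs
  imports Main
begin

type_synonym 'a impl = "'a set \<times> 'a"

definition closure_operator :: "'a set \<Rightarrow> ('a set \<Rightarrow> 'a set) \<Rightarrow> bool" where
  "closure_operator X phi \<longleftrightarrow>
     (\<forall>S. S \<subseteq> X \<longrightarrow> S \<subseteq> phi S \<and> phi S \<subseteq> X) \<and>
     (\<forall>S T. S \<subseteq> T \<and> T \<subseteq> X \<longrightarrow> phi S \<subseteq> phi T) \<and>
     (\<forall>S. S \<subseteq> X \<longrightarrow> phi (phi S) = phi S)"

definition closed_sets :: "'a set \<Rightarrow> ('a set \<Rightarrow> 'a set) \<Rightarrow> 'a set set" where
  "closed_sets X phi = {C. C \<subseteq> X \<and> phi C = C}"

definition standard :: "'a set \<Rightarrow> ('a set \<Rightarrow> 'a set) \<Rightarrow> bool" where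
  "standard X phi \<longleftrightarrow> closure_operator X phi \<and> phi {} = {} \<and>
     (\<forall>x\<in>X. phi {x} - {x} \<in> closed_sets X phi)"

definition Sigma_closed_sets :: "'a set \<Rightarrow> 'a impl set \<Rightarrow> 'a set set" where
  "Sigma_closed_sets X \<Sigma> = {S. S \<subseteq> X \<and> (\<forall>(A, b)\<in>\<Sigma>. \<not> A \<subseteq> S \<or> b \<in> S)}"

definition is_impl_base :: "'a set \<Rightarrow> ('a set \<Rightarrow> 'a set) \<Rightarrow> 'a impl set \<Rightarrow> bool" where
  "is_impl_base X phi \<Sigma> \<longleftrightarrow> (\<forall>(A, b)\<in>\<Sigma>. A \<subseteq> X \<and> b \<in> X) \<and>
     Sigma_closed_sets X \<Sigma> = closed_sets X phi"

definition dep_graph :: "'a impl set \<Rightarrow> 'a rel" where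
  "dep_graph \<Sigma> = {(x, y). \<exists>A. (A, y) \<in> \<Sigma> \<and> x \<in> A}"

definition acyclic_base :: "'a impl set \<Rightarrow> bool" where
  "acyclic_base \<Sigma> \<longleftrightarrow> acyclic (dep_graph \<Sigma>)"

definition irredundant :: "'a set \<Rightarrow> 'a impl set \<Rightarrow> bool" where
  "irredundant X \<Sigma> \<longleftrightarrow> (\<forall>i\<in>\<Sigma>. Sigma_closed_sets X (\<Sigma> - {i}) \<noteq> Sigma_closed_sets X \<Sigma>)"

definition acyclic_convex_geometry :: "'a set \<Rightarrow> ('a set \<Rightarrow> 'a set) \<Rightarrow> bool" where
  "acyclic_convex_geometry X phi \<longleftrightarrow> finite X \<and> standard X phi \<and>
     (\<exists>\<Sigma>. is_impl_base X phi \<Sigma> \<and> acyclic_base \<Sigma>)"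

definition min_gen :: "'a set \<Rightarrow> ('a set \<Rightarrow> 'a set) \<Rightarrow> 'a set \<Rightarrow> 'a \<Rightarrow> bool" where
  "min_gen X phi A b \<longleftrightarrow> A \<subseteq> X \<and> b \<in> X \<and> b \<notin> A \<and> b \<in> phi A \<and>
     (\<forall>x\<in>A. b \<notin> phi (A - {x}))"

definition critical_base :: "'a set \<Rightarrow> ('a set \<Rightarrow> 'a set) \<Rightarrow> 'a impl set" where
  "critical_base X phi = (THE \<Sigma>. is_impl_base X phi \<Sigma> \<and> irredundant X \<Sigma> \<and>
     (\<forall>(A, b)\<in>\<Sigma>. min_gen X phi A b))"

definition critical :: "'a set \<Rightarrow> ('a set \<Rightarrow> 'a set) \<Rightarrow> 'a set \<Rightarrow> 'a \<Rightarrow> bool" where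
  "critical X phi A b \<longleftrightarrow> min_gen X phi A b \<and> (A, b) \<in> critical_base X phi"

definition redundant :: "'a set \<Rightarrow> ('a set \<Rightarrow> 'a set) \<Rightarrow> 'a set \<Rightarrow> 'a \<Rightarrow> bool" where
  "redundant X phi A b \<longleftrightarrow> min_gen X phi A b \<and> (A, b) \<notin> critical_base X phi"

end

theory Submission
  imports Defs
begin

text \<open>
  Call an implication \<open>A \<rightarrow> b\<close> with \<open>A\<close> a minimal generator of \<open>b\<close> isolated if \<open>A\<close> is the only
  minimal generator of \<open>b\<close> inside \<open>\<phi>(A)\<close>. Every base made of minimal generators must contain the
  isolated implications, since \<open>\<phi>(A) - {b}\<close> is not closed and only \<open>A \<rightarrow> b\<close> can witness this.
  Conversely, in the presence of an acyclic base \<open>\<Sigma>\<close> the isolated implications already form a base: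
  \<open>b \<in> \<phi>(A)\<close> is derivable from the elements of \<open>A\<close> lying below \<open>b\<close> in the dependency graph of
  \<open>\<Sigma>\<close>, so two minimal generators \<open>A \<noteq> B\<close> with \<open>B \<subseteq> \<phi>(A)\<close> satisfy \<open>\<phi>(B) \<subset> \<phi>(A)\<close>, and a
  non-isolated implication is recovered from one with a smaller closure and premises strictly
  below \<open>b\<close>. Hence the isolated implications are exactly the critical base.
\<close>

definition isolated_impls :: "'a set \<Rightarrow> ('a set \<Rightarrow> 'a set) \<Rightarrow> 'a impl set" where
  "isolated_impls X phi = {(A, b). min_gen X phi A b \<and>
      (\<forall>B. B \<subseteq> phi A \<and> min_gen X phi B b \<longrightarrow> B = A)}"

definition ancestors :: "'a impl set \<Rightarrow> 'a \<Rightarrow> 'a set" where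
  "ancestors \<Sigma> y = {z. (z, y) \<in> (dep_graph \<Sigma>)\<^sup>*}"

lemma Sigma_closed_sets_antimono:
  "\<Sigma>1 \<subseteq> \<Sigma>2 \<Longrightarrow> Sigma_closed_sets X \<Sigma>2 \<subseteq> Sigma_closed_sets X \<Sigma>1"
  unfolding Sigma_closed_sets_def by blast

lemma irredundant_base_eq_sub_base:
  assumes "is_impl_base X phi K" "is_impl_base X phi \<Sigma>" "K \<subseteq> \<Sigma>" "irredundant X \<Sigma>"
  shows "\<Sigma> = K"
proof (rule ccontr)
  assume "\<Sigma> \<noteq> K"
  then obtain i where i: "i \<in> \<Sigma>" "i \<notin> K" using assms(3) by blast
  have "Sigma_closed_sets X (\<Sigma> - {i}) \<subseteq> Sigma_closed_sets X K"
    using Sigma_closed_sets_antimono[of K "\<Sigma> - {i}"] assms(3) i(2) by blast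
  also have "\<dots> = Sigma_closed_sets X \<Sigma>"
    using assms(1,2) unfolding is_impl_base_def by simp
  finally have "Sigma_closed_sets X (\<Sigma> - {i}) = Sigma_closed_sets X \<Sigma>"
    using Sigma_closed_sets_antimono[of "\<Sigma> - {i}" \<Sigma>] by blast
  then show False using assms(4) i(1) unfolding irredundant_def by blast
qed

locale closure_space =
  fixes X :: "'a set" and phi :: "'a set \<Rightarrow> 'a set"
  assumes closure_operator: "closure_operator X phi"
begin

lemma closure_extensive: "S \<subseteq> X \<Longrightarrow> S \<subseteq> phi S"
  using closure_operator unfolding closure_operator_def by simp

lemma closure_subset: "S \<subseteq> X \<Longrightarrow> phi S \<subseteq> X"
  using closure_operator unfolding closure_operator_def by simp

lemma closure_mono: "S \<subseteq> T \<Longrightarrow> T \<subseteq> X \<Longrightarrow> phi S \<subseteq> phi T"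
  using closure_operator unfolding closure_operator_def by simp

lemma closure_idem: "S \<subseteq> X \<Longrightarrow> phi (phi S) = phi S"
  using closure_operator unfolding closure_operator_def by simp

lemma closure_subset_closure: "S \<subseteq> phi T \<Longrightarrow> T \<subseteq> X \<Longrightarrow> phi S \<subseteq> phi T"
  using closure_mono[OF _ closure_subset] closure_idem by metis

lemma closure_least: "S \<subseteq> C \<Longrightarrow> C \<subseteq> X \<Longrightarrow> phi C = C \<Longrightarrow> phi S \<subseteq> C"
  using closure_mono by metis

lemma exists_min_gen_subset:
  assumes "A \<subseteq> X" "finite A" "b \<in> phi A" "b \<notin> A"
  obtains A' where "A' \<subseteq> A" "min_gen X phi A' b"
proof -
  let ?G = "{A'. A' \<subseteq> A \<and> b \<in> phi A'}"
  have "finite ?G" "?G \<noteq> {}" using assms(2,3) by auto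
  then obtain A' where A': "A' \<in> ?G" and minimal: "\<And>A''. A'' \<in> ?G \<Longrightarrow> A'' \<subseteq> A' \<Longrightarrow> A' = A''"
    using finite_has_minimal by meson
  have "b \<in> X" using assms(1,3) closure_subset by blast
  moreover have "b \<notin> phi (A' - {x})" if "x \<in> A'" for x
    using minimal[of "A' - {x}"] A' that by blast
  ultimately have "min_gen X phi A' b"
    using A' assms(1,4) unfolding min_gen_def by blast
  with A' that show thesis by blast
qed

lemma min_gen_independent:
  assumes "min_gen X phi A b" "a \<in> A"
  shows "a \<notin> phi (A - {a})"
proof
  assume "a \<in> phi (A - {a})"
  moreover have "A - {a} \<subseteq> X" "A - {a} \<subseteq> phi (A - {a})"
    using assms(1) closure_extensive[of "A - {a}"] unfolding min_gen_def by auto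
  ultimately have "phi A \<subseteq> phi (A - {a})"
    using closure_subset_closure[of A "A - {a}"] by blast
  then show False using assms unfolding min_gen_def by blast
qed

lemma isolated_impls_subset_base:
  assumes base: "is_impl_base X phi \<Sigma>" and min_gens: "\<forall>(A, b)\<in>\<Sigma>. min_gen X phi A b"
  shows "isolated_impls X phi \<subseteq> \<Sigma>"
proof clarify
  fix A b assume "(A, b) \<in> isolated_impls X phi"
  then have mg: "min_gen X phi A b"
    and unique: "\<And>B. B \<subseteq> phi A \<Longrightarrow> min_gen X phi B b \<Longrightarrow> B = A"
    unfolding isolated_impls_def by auto
  have AX: "A \<subseteq> X" and b: "b \<in> phi A" "b \<notin> A" using mg unfolding min_gen_def by auto
  define S where "S = phi A - {b}"
  have SX: "S \<subseteq> X" and AS: "A \<subseteq> S" and S_phi: "S \<subseteq> phi A"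
    unfolding S_def using closure_subset[OF AX] closure_extensive[OF AX] b by auto
  have "phi S \<noteq> S" using closure_least[OF AS SX] b unfolding S_def by blast
  then have "S \<notin> Sigma_closed_sets X \<Sigma>"
    using base unfolding is_impl_base_def closed_sets_def by auto
  then obtain B c where Bc: "(B, c) \<in> \<Sigma>" "B \<subseteq> S" "c \<notin> S"
    using SX unfolding Sigma_closed_sets_def by auto
  have mgB: "min_gen X phi B c" using min_gens Bc(1) by blast
  have "c \<in> phi A"
    using closure_subset_closure[OF subset_trans[OF Bc(2) S_phi] AX] mgB
    unfolding min_gen_def by blast
  then have "c = b" using Bc(3) unfolding S_def by blast
  with unique[of B] mgB Bc S_phi show "(A, b) \<in> \<Sigma>" by blast
qed

end

locale impl_base_space = closure_space +
  fixes \<Sigma> :: "'a impl set"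
  assumes impl_base: "is_impl_base X phi \<Sigma>"
begin

lemma dep_graph_subset: "dep_graph \<Sigma> \<subseteq> X \<times> X"
  using impl_base unfolding dep_graph_def is_impl_base_def by fast

lemma Sigma_closed_iff: "S \<in> Sigma_closed_sets X \<Sigma> \<longleftrightarrow> S \<subseteq> X \<and> phi S = S"
  using impl_base unfolding is_impl_base_def closed_sets_def by blast

lemma closure_inter_premise_closed:
  assumes D: "\<And>C c. (C, c) \<in> \<Sigma> \<Longrightarrow> c \<in> D \<Longrightarrow> C \<subseteq> D" and AX: "A \<subseteq> X"
  shows "phi A \<inter> D \<subseteq> phi (A \<inter> D)"
proof -
  define S where "S = phi (A \<inter> D) \<union> (X - D)"
  have ADX: "A \<inter> D \<subseteq> X" using AX by blast
  have SX: "S \<subseteq> X" unfolding S_def using closure_subset[OF ADX] by blast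
  have "phi (A \<inter> D) \<in> Sigma_closed_sets X \<Sigma>"
    using Sigma_closed_iff closure_subset[OF ADX] closure_idem[OF ADX] by blast
  then have "S \<in> Sigma_closed_sets X \<Sigma>"
    using D impl_base SX unfolding S_def Sigma_closed_sets_def is_impl_base_def by fast
  then have "phi S = S" using Sigma_closed_iff by blast
  moreover have "A \<subseteq> S" unfolding S_def using AX closure_extensive[OF ADX] by blast
  ultimately show ?thesis using closure_least[OF _ SX] unfolding S_def by blast
qed

lemma mem_closure_inter_ancestors:
  assumes "A \<subseteq> X" "y \<in> phi A"
  shows "y \<in> phi (A \<inter> ancestors \<Sigma> y)"
proof -
  have "C \<subseteq> ancestors \<Sigma> y" if "(C, c) \<in> \<Sigma>" "c \<in> ancestors \<Sigma> y" for C c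
    using that unfolding ancestors_def dep_graph_def by (blast intro: converse_rtrancl_into_rtrancl)
  then have "phi A \<inter> ancestors \<Sigma> y \<subseteq> phi (A \<inter> ancestors \<Sigma> y)"
    using closure_inter_premise_closed assms(1) by blast
  then show ?thesis using assms(2) unfolding ancestors_def by blast
qed

lemma min_gen_mem_trancl:
  assumes mg: "min_gen X phi A b" and y: "y \<in> A"
  shows "(y, b) \<in> (dep_graph \<Sigma>)\<^sup>+"
proof -
  have AX: "A \<subseteq> X" and b: "b \<in> phi A" "b \<notin> A" using mg unfolding min_gen_def by auto
  have "y \<in> ancestors \<Sigma> b"
  proof (rule ccontr)
    assume "y \<notin> ancestors \<Sigma> b"
    then have "phi (A \<inter> ancestors \<Sigma> b) \<subseteq> phi (A - {y})"
      using closure_mono[of _ "A - {y}"] AX by blast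
    then show False using mem_closure_inter_ancestors[OF AX b(1)] mg y unfolding min_gen_def by blast
  qed
  moreover have "y \<noteq> b" using y b by blast
  ultimately show ?thesis unfolding ancestors_def by (auto simp: rtrancl_eq_or_trancl)
qed

end

locale acyclic_impl_base_space = impl_base_space +
  assumes finite: "finite X" and acyclic: "acyclic (dep_graph \<Sigma>)"
begin

lemma wf_trancl_dep_graph: "wf ((dep_graph \<Sigma>)\<^sup>+)"
proof -
  have "finite (dep_graph \<Sigma>)" using finite_subset[OF dep_graph_subset] finite by blast
  then show ?thesis using acyclic by (simp add: finite_acyclic_wf wf_trancl)
qed

text \<open>An element \<open>a \<in> A \<inter> \<phi>(B) - B\<close> would be generated by the elements of \<open>B\<close> strictly below it,
  and each of those by elements of \<open>A\<close> below them, hence not by \<open>a\<close> itself.\<close>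

lemma min_gen_inter_closure_subset:
  assumes mg: "min_gen X phi A b" and BA: "B \<subseteq> phi A"
  shows "A \<inter> phi B \<subseteq> B"
proof (rule ccontr)
  assume "\<not> A \<inter> phi B \<subseteq> B"
  then obtain a where a: "a \<in> A" "a \<notin> B" "a \<in> phi B" by blast
  have AX: "A \<subseteq> X" using mg unfolding min_gen_def by auto
  have BX: "B \<subseteq> X" using BA closure_subset[OF AX] by blast
  have "B \<inter> ancestors \<Sigma> a \<subseteq> phi (A - {a})"
  proof
    fix y assume y: "y \<in> B \<inter> ancestors \<Sigma> a"
    have "(y, a) \<in> (dep_graph \<Sigma>)\<^sup>+"
      using y a(2) unfolding ancestors_def by (auto simp: rtrancl_eq_or_trancl)
    then have "a \<notin> ancestors \<Sigma> y"
      using acyclic trancl_rtrancl_trancl unfolding ancestors_def acyclic_def by fastforce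
    then have "A \<inter> ancestors \<Sigma> y \<subseteq> A - {a}" by blast
    moreover have "y \<in> phi (A \<inter> ancestors \<Sigma> y)"
      using mem_closure_inter_ancestors[OF AX] y BA by blast
    ultimately show "y \<in> phi (A - {a})" using closure_mono[of _ "A - {a}"] AX by blast
  qed
  then have "phi (B \<inter> ancestors \<Sigma> a) \<subseteq> phi (A - {a})"
    using closure_subset_closure AX by blast
  then show False
    using mem_closure_inter_ancestors[OF BX a(3)] min_gen_independent[OF mg a(1)] by blast
qed

lemma min_gen_eq_if_closure_eq:
  assumes "min_gen X phi A b" "min_gen X phi B c" "phi A = phi B"
  shows "A = B"
proof -
  have A: "A \<subseteq> phi B" and B: "B \<subseteq> phi A"
    using assms closure_extensive unfolding min_gen_def by auto
  have "A \<subseteq> B" using min_gen_inter_closure_subset[OF assms(1) B] A by blast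
  moreover have "B \<subseteq> A" using min_gen_inter_closure_subset[OF assms(2) A] B by blast
  ultimately show ?thesis by (rule subset_antisym)
qed

text \<open>Take \<open>c \<in> \<phi>(S) - S\<close> minimal in the dependency order, and a minimal generator \<open>A \<subseteq> S\<close> of \<open>c\<close>
  with \<open>\<phi>(A)\<close> as small as possible. If \<open>A \<rightarrow> c\<close> were not isolated, the other minimal generator
  \<open>B \<subseteq> \<phi>(A)\<close> of \<open>c\<close> would lie in \<open>S\<close> by minimality of \<open>c\<close>, and have a smaller closure.\<close>

lemma closed_if_Sigma_closed_isolated:
  assumes S: "S \<in> Sigma_closed_sets X (isolated_impls X phi)"
  shows "phi S = S"
proof (rule ccontr)
  let ?R = "(dep_graph \<Sigma>)\<^sup>+"
  have SX: "S \<subseteq> X" using S unfolding Sigma_closed_sets_def by blast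
  have respects: "c \<in> S" if "(A, c) \<in> isolated_impls X phi" "A \<subseteq> S" for A c
    using S that unfolding Sigma_closed_sets_def by blast
  assume "phi S \<noteq> S"
  then obtain c0 where c0: "c0 \<in> phi S - S" using closure_extensive[OF SX] by blast
  obtain c where c: "c \<in> phi S - S" and below_c: "\<And>y. (y, c) \<in> ?R \<Longrightarrow> y \<notin> phi S - S"
    using wfE_min[OF wf_trancl_dep_graph c0] by blast
  have "c \<in> phi S" "c \<notin> S" using c by auto
  then obtain A0 where "A0 \<subseteq> S \<and> min_gen X phi A0 c"
    using exists_min_gen_subset[OF SX finite_subset[OF SX finite]] by metis
  then obtain A where A: "A \<subseteq> S" "min_gen X phi A c"
    and least: "\<And>B. B \<subseteq> S \<and> min_gen X phi B c \<Longrightarrow> card (phi A) \<le> card (phi B)"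
    using ex_has_least_nat[of "\<lambda>A. A \<subseteq> S \<and> min_gen X phi A c" A0 "\<lambda>A. card (phi A)"] by metis
  have AX: "A \<subseteq> X" using A(1) SX by blast
  have "(A, c) \<notin> isolated_impls X phi" using respects A(1) c by blast
  then obtain B where B: "B \<subseteq> phi A" "min_gen X phi B c" "B \<noteq> A"
    using A(2) unfolding isolated_impls_def by blast
  have "B \<subseteq> phi S" using B(1) closure_mono[OF A(1) SX] by blast
  then have "B \<subseteq> S" using below_c min_gen_mem_trancl[OF B(2)] by blast
  have "phi B \<subseteq> phi A" using closure_subset_closure[OF B(1) AX] .
  moreover have "phi B \<noteq> phi A" using min_gen_eq_if_closure_eq[OF A(2) B(2)] B(3) by metis
  ultimately have "card (phi B) < card (phi A)"
    using psubset_card_mono finite_subset[OF closure_subset[OF AX] finite] by blast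
  then show False using least[of B] \<open>B \<subseteq> S\<close> B(2) by simp
qed

lemma isolated_impls_impl_base: "is_impl_base X phi (isolated_impls X phi)"
  unfolding is_impl_base_def
proof (intro conjI set_eqI iffI)
  show "\<forall>(A, b)\<in>isolated_impls X phi. A \<subseteq> X \<and> b \<in> X"
    unfolding isolated_impls_def min_gen_def by auto
next
  fix S assume "S \<in> Sigma_closed_sets X (isolated_impls X phi)"
  then show "S \<in> closed_sets X phi"
    using closed_if_Sigma_closed_isolated unfolding Sigma_closed_sets_def closed_sets_def by blast
next
  fix S assume "S \<in> closed_sets X phi"
  then have SX: "S \<subseteq> X" "phi S = S" unfolding closed_sets_def by auto
  have "b \<in> S" if "(A, b) \<in> isolated_impls X phi" "A \<subseteq> S" for A b
    using closure_least[OF that(2) SX] that(1) unfolding isolated_impls_def min_gen_def by blast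
  then show "S \<in> Sigma_closed_sets X (isolated_impls X phi)"
    using SX(1) unfolding Sigma_closed_sets_def by blast
qed

lemma critical_base_eq_isolated_impls: "critical_base X phi = isolated_impls X phi"
  unfolding critical_base_def
proof (rule the_equality)
  let ?K = "isolated_impls X phi"
  have min_gens: "\<forall>(A, b)\<in>?K. min_gen X phi A b" unfolding isolated_impls_def by auto
  have "irredundant X ?K"
    unfolding irredundant_def
  proof (intro ballI notI)
    fix i assume "i \<in> ?K" "Sigma_closed_sets X (?K - {i}) = Sigma_closed_sets X ?K"
    then have "is_impl_base X phi (?K - {i})" "i \<in> ?K"
      using isolated_impls_impl_base unfolding is_impl_base_def by auto
    then show False using isolated_impls_subset_base[of "?K - {i}"] min_gens by blast
  qed
  then show "is_impl_base X phi ?K \<and> irredundant X ?K \<and> (\<forall>(A, b)\<in>?K. min_gen X phi A b)"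
    using isolated_impls_impl_base min_gens by blast
next
  fix \<Sigma>' assume "is_impl_base X phi \<Sigma>' \<and> irredundant X \<Sigma>' \<and> (\<forall>(A, b)\<in>\<Sigma>'. min_gen X phi A b)"
  then show "\<Sigma>' = isolated_impls X phi"
    using irredundant_base_eq_sub_base isolated_impls_impl_base isolated_impls_subset_base by blast
qed

end

theorem proposition3:
  fixes X :: "'a set" and phi :: "'a set \<Rightarrow> 'a set" and A :: "'a set" and b :: 'a
  assumes "acyclic_convex_geometry X phi"
    and "min_gen X phi A b"
  shows "redundant X phi A b \<longleftrightarrow> (\<exists>B. B \<subseteq> phi A \<and> min_gen X phi B b \<and> B \<noteq> A)"
proof -
  obtain \<Sigma> where "acyclic_impl_base_space X phi \<Sigma>"
    using assms(1)
    unfolding acyclic_convex_geometry_def standard_def acyclic_base_def acyclic_impl_base_space_def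
      acyclic_impl_base_space_axioms_def impl_base_space_def impl_base_space_axioms_def
      closure_space_def
    by blast
  then have "critical_base X phi = isolated_impls X phi"
    by (rule acyclic_impl_base_space.critical_base_eq_isolated_impls)
  then show ?thesis using assms(2) unfolding redundant_def isolated_impls_def by auto
qed

end
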